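(* Let $S$ be a set and $\emptyset\neq\mathcal{E}\subseteq\mathcal{P}(S)$. For every $A \subseteq S$, the set $\{N_{A}\neq 0\}=\{M\in C(S)\mid M\cap A\neq\emptyset\}$ belongs to $\mathfrak{H}(\mathcal{E})$ if and only if $A$ is the union of a countable (possibly empty) family of sets in $\mathcal{E}$.
   Context: $C(S)$ is the set of countable subsets of $S$; $N_A(M)=|A\cap M|$ for $A\subseteq S$, $M\in C(S)$; $\mathfrak{H}(\mathcal{E})=\sigma(\{N_E\neq0\}\mid E\in\mathcal{E})$ is a $\sigma$-field on $C(S)$. *)

theory Defs
  imports "HOL-Analysis.Analysis"
begin

definition countable_subsets :: "'a set \<Rightarrow> 'a set set" where
  "countable_subsets S = {M. M \<subseteq> S \<and> countable M}"

definition hits :: "'a set \<Rightarrow> 'a set \<Rightarrow> 'a set set" where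
  "hits S A = {M \<in> countable_subsets S. M \<inter> A \<noteq> {}}"

definition hit_sigma :: "'a set \<Rightarrow> 'a set set \<Rightarrow> 'a set set set" where
  "hit_sigma S \<E> = sigma_sets (countable_subsets S) ((\<lambda>E. hits S E) ` \<E>)"

end

theory Submission
  imports Defs
begin

(*
  Call a family X of countable subsets of S determined by a family F0 of
  subsets of S if membership M \<in> X depends only on which members of F0 the set M meets.
  Every generator hits S E of H(E) is determined by {E}, and determinedness by a
  countable subfamily of E is preserved under complements and countable unions, so
  every element of H(E) is determined by a countable subfamily F0 of E.

  If hits S A is determined by F0, then A is the union of those E \<in> F0 with E \<subseteq> A:
  otherwise some x \<in> A lies only in members of F0 that leave A, and picking one point
  outside A from each of them yields a countable M disjoint from A that meets exactly
  the same members of F0 as insert x M, which does meet A.  Conversely, hits S commutes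
  with unions, so the union of a countable subfamily gives a countable union of
  generators.
*)

definition hit_determined :: "'a set \<Rightarrow> 'a set set \<Rightarrow> 'a set set \<Rightarrow> bool" where
  "hit_determined S F0 X \<longleftrightarrow>
     (\<forall>M\<in>countable_subsets S. \<forall>M'\<in>countable_subsets S.
        (\<forall>E\<in>F0. M \<inter> E \<noteq> {} \<longleftrightarrow> M' \<inter> E \<noteq> {}) \<longrightarrow> (M \<in> X \<longleftrightarrow> M' \<in> X))"

text \<open>Rule forms of the definition.  They are used instead of unfolding it, because the
  symmetric equivalence in the unfolded form makes simp and blast loop.\<close>
lemma hit_determinedI:
  assumes "\<And>M M'. M \<in> countable_subsets S \<Longrightarrow> M' \<in> countable_subsets S \<Longrightarrow>
             (\<And>E. E \<in> F0 \<Longrightarrow> M \<inter> E \<noteq> {} \<longleftrightarrow> M' \<inter> E \<noteq> {}) \<Longrightarrow> M \<in> X \<longleftrightarrow> M' \<in> X"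
  shows "hit_determined S F0 X"
  unfolding hit_determined_def by (intro ballI impI assms) simp_all

lemma hit_determinedD:
  assumes "hit_determined S F0 X" and "M \<in> countable_subsets S" and "M' \<in> countable_subsets S"
    and "\<And>E. E \<in> F0 \<Longrightarrow> M \<inter> E \<noteq> {} \<longleftrightarrow> M' \<inter> E \<noteq> {}"
  shows "M \<in> X \<longleftrightarrow> M' \<in> X"
  using assms(1)[unfolded hit_determined_def, rule_format, OF assms(2,3) assms(4)] .

lemma hit_determined_mono:
  assumes "hit_determined S F0 X" and "F0 \<subseteq> F1"
  shows "hit_determined S F1 X"
proof (rule hit_determinedI)
  fix M M' assume M: "M \<in> countable_subsets S" "M' \<in> countable_subsets S"
    and same: "\<And>E. E \<in> F1 \<Longrightarrow> M \<inter> E \<noteq> {} \<longleftrightarrow> M' \<inter> E \<noteq> {}"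
  show "M \<in> X \<longleftrightarrow> M' \<in> X"
    using hit_determinedD[OF assms(1) M same[OF subsetD[OF assms(2)]]] .
qed

lemma hit_determined_complement:
  assumes "hit_determined S F0 X"
  shows "hit_determined S F0 (countable_subsets S - X)"
proof (rule hit_determinedI)
  fix M M' assume M: "M \<in> countable_subsets S" "M' \<in> countable_subsets S"
    and same: "\<And>E. E \<in> F0 \<Longrightarrow> M \<inter> E \<noteq> {} \<longleftrightarrow> M' \<inter> E \<noteq> {}"
  have "M \<in> X \<longleftrightarrow> M' \<in> X" by (rule hit_determinedD[OF assms M same])
  with M show "M \<in> countable_subsets S - X \<longleftrightarrow> M' \<in> countable_subsets S - X" by simp
qed

lemma hit_determined_UN:
  assumes "\<And>i. hit_determined S F0 (X i)"
  shows "hit_determined S F0 (\<Union>i. X i)"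
proof (rule hit_determinedI)
  fix M M' assume "M \<in> countable_subsets S" "M' \<in> countable_subsets S"
    and "\<And>E. E \<in> F0 \<Longrightarrow> M \<inter> E \<noteq> {} \<longleftrightarrow> M' \<inter> E \<noteq> {}"
  then have "M \<in> X i \<longleftrightarrow> M' \<in> X i" for i by (rule hit_determinedD[OF assms])
  then show "M \<in> (\<Union>i. X i) \<longleftrightarrow> M' \<in> (\<Union>i. X i)" by simp
qed

lemma hit_sigma_countably_determined:
  assumes "X \<in> hit_sigma S \<E>"
  shows "\<exists>F0. countable F0 \<and> F0 \<subseteq> \<E> \<and> hit_determined S F0 X"
  using assms unfolding hit_sigma_def
proof (induction rule: sigma_sets.induct)
  case (Basic X)
  then obtain E where "E \<in> \<E>" "X = hits S E" by auto
  moreover have "hit_determined S {E} (hits S E)"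
    by (rule hit_determinedI) (auto simp: hits_def)
  ultimately show ?case by blast
next
  case Empty
  have "hit_determined S {} {}" by (rule hit_determinedI) simp
  then show ?case by blast
next
  case (Compl X)
  then obtain F0 where "countable F0" "F0 \<subseteq> \<E>" "hit_determined S F0 X" by blast
  then show ?case by (blast intro: hit_determined_complement)
next
  case (Union X)
  then have "\<forall>i. \<exists>F0. countable F0 \<and> F0 \<subseteq> \<E> \<and> hit_determined S F0 (X i)" by blast
  then obtain F where F: "\<And>i. countable (F i)" "\<And>i. F i \<subseteq> \<E>"
    "\<And>i. hit_determined S (F i) (X i)"
    by metis
  have "hit_determined S (\<Union>i. F i) (X i)" for i
    using F(3) by (rule hit_determined_mono) blast
  then have "hit_determined S (\<Union>i. F i) (\<Union>i. X i)" by (rule hit_determined_UN)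
  with F(1,2) show ?case by (intro exI[of _ "\<Union>i. F i"]) auto
qed

lemma hits_Union: "hits S (\<Union>\<F>) = (\<Union>E\<in>\<F>. hits S E)"
  by (auto simp: hits_def)

lemma hits_countable_Union_in_hit_sigma:
  assumes "countable \<F>" and "\<F> \<subseteq> \<E>"
  shows "hits S (\<Union>\<F>) \<in> hit_sigma S \<E>"
proof (cases "\<F> = {}")
  case True
  then have "hits S (\<Union>\<F>) = {}" by (simp add: hits_def)
  then show ?thesis by (simp add: hit_sigma_def sigma_sets.Empty)
next
  case False
  have range_F: "range (from_nat_into \<F>) = \<F>"
    using range_from_nat_into[OF False assms(1)] .
  have "hits S (from_nat_into \<F> i) \<in> hit_sigma S \<E>" for i
    using from_nat_into[OF False] assms(2) unfolding hit_sigma_def by blast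
  then have "(\<Union>i. hits S (from_nat_into \<F> i)) \<in> hit_sigma S \<E>"
    unfolding hit_sigma_def by (rule sigma_sets.Union)
  moreover have "hits S (\<Union>\<F>) = (\<Union>E\<in>range (from_nat_into \<F>). hits S E)"
    by (simp only: hits_Union range_F)
  ultimately show ?thesis by (simp add: image_image)
qed

lemma countable_transversal_outside:
  assumes "countable F0" and "F0 \<subseteq> Pow S"
    and leaves: "\<And>E. E \<in> F0 \<Longrightarrow> x \<in> E \<Longrightarrow> \<not> E \<subseteq> A"
  obtains M where "M \<in> countable_subsets S" "M \<inter> A = {}"
    and "\<And>E. E \<in> F0 \<Longrightarrow> x \<in> E \<Longrightarrow> M \<inter> E \<noteq> {}"
proof -
  have "\<forall>E\<in>{E\<in>F0. x \<in> E}. \<exists>y. y \<in> E \<and> y \<notin> A"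
    using leaves by blast
  then obtain g where g: "\<forall>E\<in>{E\<in>F0. x \<in> E}. g E \<in> E \<and> g E \<notin> A"
    by (rule bchoice[elim_format]) blast
  define M where "M = g ` {E\<in>F0. x \<in> E}"
  have "M \<in> countable_subsets S"
    using g assms(1,2) by (auto simp: M_def countable_subsets_def)
  moreover have "M \<inter> A = {}" using g by (auto simp: M_def)
  moreover have "M \<inter> E \<noteq> {}" if "E \<in> F0" "x \<in> E" for E
    using g that by (auto simp: M_def)
  ultimately show thesis by (rule that)
qed

lemma hit_determined_cover:
  assumes "countable F0" and "F0 \<subseteq> Pow S" and "A \<subseteq> S"
    and det: "hit_determined S F0 (hits S A)"
  shows "A = \<Union>{E\<in>F0. E \<subseteq> A}"
proof (rule ccontr)
  assume "A \<noteq> \<Union>{E\<in>F0. E \<subseteq> A}"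
  then obtain x where x: "x \<in> A" "x \<notin> \<Union>{E\<in>F0. E \<subseteq> A}" by blast
  then have "\<And>E. E \<in> F0 \<Longrightarrow> x \<in> E \<Longrightarrow> \<not> E \<subseteq> A" by blast
  with assms(1,2) obtain M where M: "M \<in> countable_subsets S" "M \<inter> A = {}"
    and meets: "\<And>E. E \<in> F0 \<Longrightarrow> x \<in> E \<Longrightarrow> M \<inter> E \<noteq> {}"
    by (rule countable_transversal_outside) blast+
  have Mx: "insert x M \<in> countable_subsets S"
    using M(1) x(1) assms(3) by (auto simp: countable_subsets_def)
  have same_hits: "M \<inter> E \<noteq> {} \<longleftrightarrow> insert x M \<inter> E \<noteq> {}" if "E \<in> F0" for E
    using meets[OF that] by auto
  have "insert x M \<in> hits S A" using Mx x(1) by (auto simp: hits_def)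
  with hit_determinedD[OF det M(1) Mx same_hits] have "M \<in> hits S A" by simp
  with M(2) show False by (auto simp: hits_def)
qed

theorem theorem3p3:
  fixes S :: "'a set" and \<E> :: "'a set set" and A :: "'a set"
  assumes "\<E> \<noteq> {}" and "\<E> \<subseteq> Pow S" and "A \<subseteq> S"
  shows "hits S A \<in> hit_sigma S \<E> \<longleftrightarrow>
         (\<exists>\<F>. countable \<F> \<and> \<F> \<subseteq> \<E> \<and> A = \<Union>\<F>)"
proof
  assume "hits S A \<in> hit_sigma S \<E>"
  then obtain F0 where F0: "countable F0" "F0 \<subseteq> \<E>" "hit_determined S F0 (hits S A)"
    using hit_sigma_countably_determined by blast
  then have "A = \<Union>{E\<in>F0. E \<subseteq> A}"
    using assms(2,3) by (intro hit_determined_cover) auto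
  moreover have "countable {E\<in>F0. E \<subseteq> A}" using F0(1) by simp
  ultimately show "\<exists>\<F>. countable \<F> \<and> \<F> \<subseteq> \<E> \<and> A = \<Union>\<F>"
    using F0(2) by blast
next
  assume "\<exists>\<F>. countable \<F> \<and> \<F> \<subseteq> \<E> \<and> A = \<Union>\<F>"
  then show "hits S A \<in> hit_sigma S \<E>"
    using hits_countable_Union_in_hit_sigma by blast
qed

end
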